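(* Assume the setting in the context with $\epsilon \in (0,1)$, $\delta = \bigl(1 + \frac{k+3}{2\epsilon}\bigr)^{-1}$, $S_{\mathrm{init}} = \{e^*\}$ where $e^* \in \arg\max_{e \in \mathcal{G}} f(\{e\})$, and $\alpha = f(S_{\mathrm{init}})\,\delta / n$ (assume $f(S_{\mathrm{init}}) > 0$). Let $S \in \mathcal{I}$ be locally optimal, i.e. $\sum_{a \in A} w_{(A,B)}(a)^2 \le \sum_{b \in B} w(b)^2$ for every $k$-replacement $(A,B)$ for $S$ (for an arbitrary total order $\prec$ used to define the weights), and let $O \in \arg\max_{X \in \mathcal{I}} f(X)$. Then \[ \Bigl(\frac{k+3}{2} + \epsilon\Bigr) f(S) \;\ge\; f(O). \]
   Context: Setting. $\mathcal{G}$ is a finite ground set with $|\mathcal{G}| = n$, and $f : 2^{\mathcal{G}} \to \mathbb{R}_{\ge 0}$ is a nonnegative monotone submodular function. $\mathcal{I} \subseteq 2^{\mathcal{G}}$ is a nonempty downward-closed family that is a $k$-exchange system ($k \ge 1$): for all $A, B \in \mathcal{I}$ there is a collection $\{Y_e \subseteq B \setminus A : e \in A \setminus B\}$ such that (K1) $|Y_e| \le k$ for each $e$; (K2) every $x \in B \setminus A$ lies in at most $k$ of the sets $Y_e$; (K3) for every $C \subseteq A \setminus B$, $(B \setminus \bigcup_{e \in C} Y_e) \cup C \in \mathcal{I}$. It is assumed that every singleton $\{e\}$, $e\in\mathcal{G}$, is in $\mathcal{I}$. Weights. Given $\alpha > 0$ and a total order $\prec$ on $\mathcal{G}$: for $S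 \in \mathcal{I}$ with elements $s_1 \prec \dots \prec s_m$ and $S_i = \{s_1,\dots,s_i\}$, define $w(s_i) = \lfloor (f(S_{i-1} \cup \{s_i\}) - f(S_{i-1}))/\alpha \rfloor \alpha$. A $k$-replacement for $S$ is a pair $(A,B)$ with $B \subseteq S$, $A \subseteq \mathcal{G} \setminus (S \setminus B)$, $|A| \le k$, $|B| \le k^2 - k + 1$, and $(S \setminus B) \cup A \in \mathcal{I}$. For such a pair, write $A = \{a_1 \prec \dots \prec a_r\}$, $A_i = \{a_1,\dots,a_i\}$, and define $w_{(A,B)}(a_i) = \lfloor (f((S\setminus B) \cup A_{i-1} \cup \{a_i\}) - f((S\setminus B)\cup A_{i-1}))/\alpha \rfloor \alpha$. *)

theory Defs
  imports Complex_Main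
begin

definition nonneg_monotone_submodular :: "'a set \<Rightarrow> ('a set \<Rightarrow> real) \<Rightarrow> bool" where
  "nonneg_monotone_submodular G f \<longleftrightarrow>
     (\<forall>X. X \<subseteq> G \<longrightarrow> 0 \<le> f X) \<and>
     (\<forall>X Y. X \<subseteq> Y \<and> Y \<subseteq> G \<longrightarrow> f X \<le> f Y) \<and>
     (\<forall>X Y. X \<subseteq> G \<and> Y \<subseteq> G \<longrightarrow> f (X \<union> Y) + f (X \<inter> Y) \<le> f X + f Y)"

definition k_exchange_system :: "'a set \<Rightarrow> 'a set set \<Rightarrow> nat \<Rightarrow> bool" where
  "k_exchange_system G I k \<longleftrightarrow>
     I \<subseteq> Pow G \<and> I \<noteq> {} \<and>
     (\<forall>X Y. X \<in> I \<and> Y \<subseteq> X \<longrightarrow> Y \<in> I) \<and>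
     (\<forall>A\<in>I. \<forall>B\<in>I. \<exists>Ys :: 'a \<Rightarrow> 'a set.
        (\<forall>e \<in> A - B. Ys e \<subseteq> B - A \<and> card (Ys e) \<le> k) \<and>
        (\<forall>x \<in> B - A. card {e \<in> A - B. x \<in> Ys e} \<le> k) \<and>
        (\<forall>C. C \<subseteq> A - B \<longrightarrow> (B - (\<Union>e\<in>C. Ys e)) \<union> C \<in> I))"

text \<open>Rounded marginal weight of element s in S w.r.t. strict order R (pairs (x,y) mean x \<prec> y):
  marginal gain of s over its predecessors in S, rounded down to a multiple of alpha.\<close>
definition rweight :: "('a set \<Rightarrow> real) \<Rightarrow> real \<Rightarrow> 'a rel \<Rightarrow> 'a set \<Rightarrow> 'a \<Rightarrow> real" where
  "rweight f \<alpha> R S s =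
     (let P = {x \<in> S. (x, s) \<in> R} in
      of_int \<lfloor>(f (P \<union> {s}) - f P) / \<alpha>\<rfloor> * \<alpha>)"

definition w_S :: "('a set \<Rightarrow> real) \<Rightarrow> real \<Rightarrow> 'a rel \<Rightarrow> 'a set \<Rightarrow> 'a \<Rightarrow> real" where
  "w_S f \<alpha> R S s = rweight f \<alpha> R S s"

definition w_repl :: "('a set \<Rightarrow> real) \<Rightarrow> real \<Rightarrow> 'a rel \<Rightarrow> 'a set \<Rightarrow> 'a set \<Rightarrow> 'a set \<Rightarrow> 'a \<Rightarrow> real" where
  "w_repl f \<alpha> R S A B a =
     (let P = (S - B) \<union> {x \<in> A. (x, a) \<in> R} in
      of_int \<lfloor>(f (P \<union> {a}) - f P) / \<alpha>\<rfloor> * \<alpha>)"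

definition k_replacement :: "'a set \<Rightarrow> 'a set set \<Rightarrow> nat \<Rightarrow> 'a set \<Rightarrow> 'a set \<Rightarrow> 'a set \<Rightarrow> bool" where
  "k_replacement G I k S A B \<longleftrightarrow>
     B \<subseteq> S \<and> A \<subseteq> G - (S - B) \<and> card A \<le> k \<and> card B \<le> k^2 - k + 1 \<and>
     (S - B) \<union> A \<in> I"

definition locally_optimal ::
  "'a set \<Rightarrow> 'a set set \<Rightarrow> nat \<Rightarrow> ('a set \<Rightarrow> real) \<Rightarrow> real \<Rightarrow> 'a rel \<Rightarrow> 'a set \<Rightarrow> bool" where
  "locally_optimal G I k f \<alpha> R S \<longleftrightarrow>
     (\<forall>A B. k_replacement G I k S A B \<longrightarrow>
        (\<Sum>a\<in>A. (w_repl f \<alpha> R S A B a)^2) \<le> (\<Sum>b\<in>B. (w_S f \<alpha> R S b)^2))"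

end

theory Submission
  imports Defs
begin

(*
  Fix the optimum Opt and a locally optimal S, and use the k-exchange property for the pair
  (Opt, S) to attach to every q in Opt - S an exchange set Ys q contained in S - Opt.
  (1) The rounded weights w of S telescope, so their sum is at most f S.
  (2) Give every q in Opt - S the gain "marginal value of q over S and its R-predecessors
      in Opt - S, rounded down to a multiple of alpha"; these marginals telescope, so the
      gains sum to at least f (S \<union> Opt) - f S - |Opt - S| alpha.
  (3) Group the q with nonempty Ys q into claws around the heaviest element s of Ys q.
      Each claw is a k-replacement, and local optimality (a comparison of squared weights)
      bounds the gains of the claw by w s / 2 plus half the weight of the exchanged elements.
      As every element of S - Opt lies in at most k exchange sets, the gains sum to at most
      (k + 1) / 2 times the weight of S - Opt.
*)

definition round_down :: "real \<Rightarrow> real \<Rightarrow> real" where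
  "round_down \<alpha> x = of_int \<lfloor>x / \<alpha>\<rfloor> * \<alpha>"

lemma round_down_le:
  assumes "\<alpha> > 0" shows "round_down \<alpha> x \<le> x"
proof -
  have "of_int \<lfloor>x / \<alpha>\<rfloor> * \<alpha> \<le> x / \<alpha> * \<alpha>"
    using assms by (intro mult_right_mono) auto
  then show ?thesis using assms unfolding round_down_def by simp
qed

lemma round_down_ge:
  assumes "\<alpha> > 0" shows "x - \<alpha> \<le> round_down \<alpha> x"
proof -
  have "(x / \<alpha> - 1) * \<alpha> \<le> of_int \<lfloor>x / \<alpha>\<rfloor> * \<alpha>"
    using assms by (intro mult_right_mono) linarith+
  then show ?thesis using assms unfolding round_down_def by (simp add: algebra_simps)
qed

lemma round_down_mono:
  assumes "\<alpha> > 0" "x \<le> y" shows "round_down \<alpha> x \<le> round_down \<alpha> y"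
  using assms unfolding round_down_def by (simp add: divide_right_mono floor_mono)

lemma round_down_nonneg:
  assumes "\<alpha> > 0" "0 \<le> x" shows "0 \<le> round_down \<alpha> x"
  using assms unfolding round_down_def by simp

lemma w_S_round_down:
  "w_S f \<alpha> R S s = round_down \<alpha> (f ({x\<in>S. (x, s) \<in> R} \<union> {s}) - f {x\<in>S. (x, s) \<in> R})"
  unfolding w_S_def rweight_def round_down_def Let_def ..

lemma w_repl_round_down:
  "w_repl f \<alpha> R S A B a = round_down \<alpha>
     (f ((S - B) \<union> {x\<in>A. (x, a) \<in> R} \<union> {a}) - f ((S - B) \<union> {x\<in>A. (x, a) \<in> R}))"
  unfolding w_repl_def round_down_def Let_def ..

lemma finite_has_R_maximal:
  assumes "trans R" "irrefl R" "finite T" "T \<noteq> {}"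
  shows "\<exists>m\<in>T. \<forall>x\<in>T. (m, x) \<notin> R"
  using assms(3,4)
proof (induction T rule: finite_ne_induct)
  case (singleton x)
  then show ?case using assms(2) by (auto simp: irrefl_def)
next
  case (insert x F)
  then obtain m where m: "m \<in> F" "\<forall>y\<in>F. (m, y) \<notin> R" by auto
  show ?case
  proof (cases "(m, x) \<in> R")
    case True
    then have "\<forall>y\<in>insert x F. (x, y) \<notin> R"
      using m assms(1,2) by (metis insertE irrefl_def transD)
    then show ?thesis by auto
  qed (use m in auto)
qed

lemma telescoping_marginals:
  fixes f :: "'a set \<Rightarrow> real"
  assumes "strict_linear_order_on T R" "finite T"
  shows "(\<Sum>t\<in>T. f (X \<union> {x\<in>T. (x, t) \<in> R} \<union> {t}) - f (X \<union> {x\<in>T. (x, t) \<in> R}))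
           = f (X \<union> T) - f X"
proof -
  have tr: "trans R" and irr: "irrefl R" and tot: "total_on T R"
    using assms(1) unfolding strict_linear_order_on_def by auto
  show ?thesis
    using assms(2) tot
  proof (induction T rule: finite_remove_induct)
    case empty
    then show ?case by simp
  next
    case (remove T)
    obtain m where m: "m \<in> T" "\<forall>x\<in>T. (m, x) \<notin> R"
      using finite_has_R_maximal[OF tr irr remove(1,2)] by blast
    define T' where "T' = T - {m}"
    have T: "T = insert m T'" "m \<notin> T'" "finite T'"
      using m remove(1) unfolding T'_def by auto
    have preds_m: "{x\<in>T. (x, m) \<in> R} = T'"
      using m remove.prems irr unfolding T'_def total_on_def irrefl_def by auto
    have preds_t: "{x\<in>T. (x, t) \<in> R} = {x\<in>T'. (x, t) \<in> R}" if "t \<in> T'" for t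
      using m that unfolding T'_def by auto
    have IH: "(\<Sum>t\<in>T'. f (X \<union> {x\<in>T'. (x, t) \<in> R} \<union> {t}) - f (X \<union> {x\<in>T'. (x, t) \<in> R}))
                = f (X \<union> T') - f X"
      using remove.IH[OF m(1)] remove.prems total_on_subset unfolding T'_def by blast
    have "X \<union> T' \<union> {m} = X \<union> T" using T by auto
    then show ?case
      using T IH preds_m preds_t by (simp add: sum.insert_remove[of T'] cong: sum.cong)
  qed
qed

lemma submodular_diminishing_returns:
  assumes f: "nonneg_monotone_submodular G f" and "X \<subseteq> Y" "Y \<subseteq> G" "e \<in> G"
  shows "f (Y \<union> {e}) - f Y \<le> f (X \<union> {e}) - f X"
proof -
  have mono: "\<And>A B. A \<subseteq> B \<Longrightarrow> B \<subseteq> G \<Longrightarrow> f A \<le> f B"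
    and submod: "\<And>A B. A \<subseteq> G \<Longrightarrow> B \<subseteq> G \<Longrightarrow> f (A \<union> B) + f (A \<inter> B) \<le> f A + f B"
    using f unfolding nonneg_monotone_submodular_def by blast+
  have Xe: "X \<union> {e} \<subseteq> G" using assms(2-4) by auto
  show ?thesis
  proof (cases "e \<in> Y")
    case True
    then have "Y \<union> {e} = Y" by auto
    then show ?thesis using mono[of X "X \<union> {e}"] Xe by auto
  next
    case False
    then have "(X \<union> {e}) \<union> Y = Y \<union> {e}" "(X \<union> {e}) \<inter> Y = X" using assms(2) by auto
    then show ?thesis using submod[OF Xe assms(3)] by simp
  qed
qed

lemma sum_UN_le_nonneg:
  fixes h :: "'a \<Rightarrow> real"
  assumes "finite J" "\<And>i. i \<in> J \<Longrightarrow> finite (A i)" "\<And>x. 0 \<le> h x"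
  shows "sum h (\<Union>i\<in>J. A i) \<le> (\<Sum>i\<in>J. sum h (A i))"
  using assms(1,2)
proof (induction J rule: finite_induct)
  case (insert j J)
  have "sum h (A j \<union> (\<Union>i\<in>J. A i)) \<le> sum h (A j) + sum h (\<Union>i\<in>J. A i)"
    using insert sum_Un[of "A j" "\<Union>i\<in>J. A i" h] sum_nonneg[of _ h] assms(3) by simp
  then show ?case using insert by simp
qed simp

lemma sum_over_bounded_cover:
  fixes w :: "'b \<Rightarrow> real"
  assumes "finite Q" "finite U" "\<And>q. q \<in> Q \<Longrightarrow> Y q \<subseteq> U"
    and "\<And>u. u \<in> U \<Longrightarrow> card {q\<in>Q. u \<in> Y q} \<le> k" "\<And>u. u \<in> U \<Longrightarrow> 0 \<le> w u"
  shows "(\<Sum>q\<in>Q. \<Sum>u\<in>Y q. w u) \<le> real k * (\<Sum>u\<in>U. w u)"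
proof -
  have "(\<Sum>q\<in>Q. \<Sum>u\<in>Y q. w u) = (\<Sum>q\<in>Q. \<Sum>u\<in>U. if u \<in> Y q then w u else 0)"
  proof (rule sum.cong[OF refl])
    fix q assume "q \<in> Q"
    then have "{u\<in>U. u \<in> Y q} = Y q" using assms(3) by auto
    then show "(\<Sum>u\<in>Y q. w u) = (\<Sum>u\<in>U. if u \<in> Y q then w u else 0)"
      using sum.inter_filter[of U w "\<lambda>u. u \<in> Y q"] assms(2) by simp
  qed
  also have "\<dots> = (\<Sum>u\<in>U. w u * card {q\<in>Q. u \<in> Y q})"
    using assms(1) by (subst sum.swap) (simp add: sum.inter_filter[symmetric] mult.commute)
  also have "\<dots> \<le> (\<Sum>u\<in>U. w u * k)"
    using assms(4,5) by (intro sum_mono mult_left_mono) auto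
  finally show ?thesis by (simp add: sum_distrib_left mult.commute)
qed

text \<open>It follows from \<open>2 c y - c\<^sup>2 \<le> x\<^sup>2\<close>.\<close>

lemma squared_claw_inequality:
  fixes c :: real and x y r :: "'q \<Rightarrow> real"
  assumes T: "finite T" and c: "0 \<le> c"
    and yx: "\<And>q. q \<in> T \<Longrightarrow> y q \<le> x q" and r: "\<And>q. q \<in> T \<Longrightarrow> 0 \<le> r q"
    and sq: "(\<Sum>q\<in>T. (x q)\<^sup>2) \<le> c\<^sup>2 + c * (\<Sum>q\<in>T. r q)"
  shows "(\<Sum>q\<in>T. y q - (c + r q) / 2) \<le> c / 2"
proof (cases "c = 0")
  case True
  have "x q = 0" if "q \<in> T" for q
  proof -
    have "(x q)\<^sup>2 \<le> (\<Sum>q\<in>T. (x q)\<^sup>2)" using T that by (intro member_le_sum) auto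
    moreover have "(\<Sum>q\<in>T. (x q)\<^sup>2) \<le> 0" using sq True by simp
    ultimately have "(x q)\<^sup>2 \<le> 0" by linarith
    then show ?thesis by simp
  qed
  then have "(\<Sum>q\<in>T. y q - (c + r q) / 2) \<le> 0"
    using yx r True by (intro sum_nonpos) fastforce
  then show ?thesis using True by simp
next
  case False
  have pointwise: "2 * c * (y q - (c + r q) / 2) \<le> (x q)\<^sup>2 - c * r q" if "q \<in> T" for q
  proof -
    have "c * y q \<le> c * x q" using yx[OF that] c by (rule mult_left_mono)
    moreover have "2 * c * x q \<le> c\<^sup>2 + (x q)\<^sup>2"
      using zero_le_power2[of "x q - c"] by (simp add: power2_diff algebra_simps)
    moreover have "2 * c * (y q - (c + r q) / 2) = 2 * (c * y q) - c\<^sup>2 - c * r q"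
      by (simp add: algebra_simps power2_eq_square)
    ultimately show ?thesis by linarith
  qed
  have "2 * c * (\<Sum>q\<in>T. y q - (c + r q) / 2) \<le> (\<Sum>q\<in>T. (x q)\<^sup>2 - c * r q)"
    unfolding sum_distrib_left using pointwise by (rule sum_mono)
  also have "\<dots> \<le> c * c"
    using sq by (simp add: sum_subtractf sum_distrib_left power2_eq_square)
  finally show ?thesis using False c by (simp add: mult.assoc)
qed

lemma sum_squares_star_le:
  fixes w :: "'b \<Rightarrow> real"
  assumes T: "finite T" and Y: "\<And>q. q \<in> T \<Longrightarrow> finite (Y q)"
    and w: "\<And>q u. q \<in> T \<Longrightarrow> u \<in> Y q \<Longrightarrow> 0 \<le> w u \<and> w u \<le> w s"
  shows "(\<Sum>b\<in>(\<Union>q\<in>T. Y q). (w b)\<^sup>2) \<le> (w s)\<^sup>2 + w s * (\<Sum>q\<in>T. \<Sum>u\<in>Y q - {s}. w u)"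
proof -
  define U where "U = (\<Union>q\<in>T. Y q - {s})"
  have U: "finite U" using T Y unfolding U_def by auto
  have "(\<Sum>b\<in>(\<Union>q\<in>T. Y q). (w b)\<^sup>2) \<le> (\<Sum>b\<in>insert s U. (w b)\<^sup>2)"
    using U by (intro sum_mono2) (auto simp: U_def)
  also have "\<dots> \<le> (w s)\<^sup>2 + (\<Sum>b\<in>U. (w b)\<^sup>2)"
    using U by (simp add: sum.insert_if)
  also have "(\<Sum>b\<in>U. (w b)\<^sup>2) \<le> (\<Sum>q\<in>T. \<Sum>u\<in>Y q - {s}. (w u)\<^sup>2)"
    unfolding U_def using T Y by (intro sum_UN_le_nonneg) auto
  also have "\<dots> \<le> (\<Sum>q\<in>T. \<Sum>u\<in>Y q - {s}. w s * w u)"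
    using w by (intro sum_mono) (auto simp: power2_eq_square intro!: mult_right_mono)
  finally show ?thesis by (simp add: sum_distrib_left)
qed

lemma card_star_le:
  assumes T: "finite T" "card T \<le> k" and Y: "\<And>q. q \<in> T \<Longrightarrow> finite (Y q)"
    and s: "\<And>q. q \<in> T \<Longrightarrow> s \<in> Y q" and card_Y: "\<And>q. q \<in> T \<Longrightarrow> card (Y q) \<le> k"
  shows "card (\<Union>q\<in>T. Y q) \<le> k\<^sup>2 - k + 1"
proof -
  define U where "U = (\<Union>q\<in>T. Y q - {s})"
  have U: "finite U" using T Y unfolding U_def by auto
  have "card (\<Union>q\<in>T. Y q) \<le> card (insert s U)"
    using U by (intro card_mono) (auto simp: U_def)
  also have "\<dots> \<le> card U + 1" using U by (simp add: card_insert_if)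
  also have "card U \<le> (\<Sum>q\<in>T. card (Y q - {s}))"
    unfolding U_def using T(1) by (rule card_UN_le)
  also have "\<dots> \<le> (\<Sum>q\<in>T. k - 1)"
    using Y s card_Y by (intro sum_mono) (simp add: card_Diff_singleton diff_le_mono)
  also have "\<dots> \<le> k * (k - 1)" using T by simp
  also have "k * (k - 1) = k\<^sup>2 - k" by (simp add: power2_eq_square diff_mult_distrib2)
  finally show ?thesis by simp
qed

text \<open>The final rearrangement: losing the fraction \<open>\<delta> = 1 / (1 + c / \<epsilon>)\<close> of \<open>F\<close> to
  rounding turns the factor \<open>c\<close> into \<open>c + \<epsilon>\<close>.\<close>

lemma absorb_rounding_loss:
  fixes c \<epsilon> \<delta> F X :: real
  assumes "0 < c" "0 < \<epsilon>" "\<delta> = 1 / (1 + c / \<epsilon>)" "(1 - \<delta>) * F \<le> c * X"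
  shows "F \<le> (c + \<epsilon>) * X"
proof -
  have "(c + \<epsilon>) * (1 - \<delta>) = c" using assms(1-3) by (simp add: field_simps)
  then have "c * F = (c + \<epsilon>) * ((1 - \<delta>) * F)" by (simp add: algebra_simps)
  also have "\<dots> \<le> (c + \<epsilon>) * (c * X)" using assms by (intro mult_left_mono) auto
  finally have "c * F \<le> c * ((c + \<epsilon>) * X)" by (simp add: algebra_simps)
  then show ?thesis using assms(1) by simp
qed

locale local_search_analysis =
  fixes G :: "'a set" and I :: "'a set set" and k :: nat and f :: "'a set \<Rightarrow> real"
    and \<alpha> :: real and R :: "'a rel" and S Opt :: "'a set" and Ys :: "'a \<Rightarrow> 'a set"
  assumes finG: "finite G"
    and f: "nonneg_monotone_submodular G f"
    and k: "k \<ge> 1"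
    and alpha_pos: "\<alpha> > 0"
    and order: "strict_linear_order_on G R"
    and SG: "S \<subseteq> G" and OG: "Opt \<subseteq> G"
    and Ys_sub: "\<And>q. q \<in> Opt - S \<Longrightarrow> Ys q \<subseteq> S - Opt"
    and Ys_card: "\<And>q. q \<in> Opt - S \<Longrightarrow> card (Ys q) \<le> k"
    and Ys_mult: "\<And>s. s \<in> S - Opt \<Longrightarrow> card {q\<in>Opt - S. s \<in> Ys q} \<le> k"
    and Ys_exch: "\<And>C. C \<subseteq> Opt - S \<Longrightarrow> (S - (\<Union>q\<in>C. Ys q)) \<union> C \<in> I"
    and locopt: "locally_optimal G I k f \<alpha> R S"
begin

abbreviation w :: "'a \<Rightarrow> real" where
  "w \<equiv> w_S f \<alpha> R S"

definition preds :: "'a \<Rightarrow> 'a set" where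
  "preds q = S \<union> {x\<in>Opt - S. (x, q) \<in> R}"

definition gain :: "'a \<Rightarrow> real" where
  "gain q = round_down \<alpha> (f (preds q \<union> {q}) - f (preds q))"

lemma f_mono: "X \<subseteq> Y \<Longrightarrow> Y \<subseteq> G \<Longrightarrow> f X \<le> f Y"
  using f unfolding nonneg_monotone_submodular_def by blast

lemma finite_S: "finite S" and finite_Opt: "finite Opt"
  using finG SG OG finite_subset by auto

lemma order_on_subset: "T \<subseteq> G \<Longrightarrow> strict_linear_order_on T R"
  using order total_on_subset unfolding strict_linear_order_on_def by blast

lemma w_nonneg:
  assumes "s \<in> S" shows "0 \<le> w s"
proof -
  have "f {x\<in>S. (x, s) \<in> R} \<le> f ({x\<in>S. (x, s) \<in> R} \<union> {s})"
    using assms SG by (intro f_mono) auto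
  then show ?thesis unfolding w_S_round_down by (intro round_down_nonneg alpha_pos) simp
qed

text \<open>Step (1): the weights of \<open>S\<close> are rounded-down telescoping marginals.\<close>

lemma sum_w_le: "sum w S \<le> f S"
proof -
  have "sum w S \<le> (\<Sum>s\<in>S. f ({x\<in>S. (x, s) \<in> R} \<union> {s}) - f {x\<in>S. (x, s) \<in> R})"
    unfolding w_S_round_down by (intro sum_mono round_down_le alpha_pos)
  also have "\<dots> = f S - f {}"
    using telescoping_marginals[OF order_on_subset[OF SG] finite_S, of f "{}"] by simp
  also have "\<dots> \<le> f S" using f unfolding nonneg_monotone_submodular_def by simp
  finally show ?thesis .
qed

text \<open>Step (2): the gains telescope up to a rounding loss of \<open>\<alpha>\<close> per element.\<close>

lemma sum_gain_ge: "f (S \<union> Opt) - f S - real (card (Opt - S)) * \<alpha> \<le> sum gain (Opt - S)"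
proof -
  have "Opt - S \<subseteq> G" "finite (Opt - S)" using OG finite_Opt by auto
  then have "(\<Sum>q\<in>Opt - S. f (preds q \<union> {q}) - f (preds q)) = f (S \<union> Opt) - f S"
    using telescoping_marginals[OF order_on_subset, of "Opt - S" f S]
    unfolding preds_def by (simp add: Un_Diff_cancel)
  moreover have "(\<Sum>q\<in>Opt - S. f (preds q \<union> {q}) - f (preds q) - \<alpha>) \<le> sum gain (Opt - S)"
    unfolding gain_def by (intro sum_mono round_down_ge alpha_pos)
  ultimately show ?thesis by (simp add: sum_subtractf)
qed

text \<open>By diminishing returns, the weight of an element of \<open>Opt - S\<close> in any replacement
  drawn from \<open>Opt - S\<close> is at least its gain.\<close>

lemma gain_le_w_repl:
  assumes "A \<subseteq> Opt - S" "a \<in> A"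
  shows "gain a \<le> w_repl f \<alpha> R S A B a"
proof -
  have "(S - B) \<union> {x\<in>A. (x, a) \<in> R} \<subseteq> preds a" "preds a \<subseteq> G" "a \<in> G"
    using assms SG OG unfolding preds_def by auto
  then have "f (preds a \<union> {a}) - f (preds a)
      \<le> f ((S - B) \<union> {x\<in>A. (x, a) \<in> R} \<union> {a}) - f ((S - B) \<union> {x\<in>A. (x, a) \<in> R})"
    by (rule submodular_diminishing_returns[OF f])
  then show ?thesis unfolding gain_def w_repl_round_down by (rule round_down_mono[OF alpha_pos])
qed

text \<open>An element with empty exchange set can be added to \<open>S\<close> for free; local optimality
  then forces its gain to be nonpositive.\<close>

lemma gain_nonpos_unmatched:
  assumes q: "q \<in> Opt - S" and "Ys q = {}"
  shows "gain q \<le> 0"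
proof -
  have "k_replacement G I k S {q} {}"
    using Ys_exch[of "{q}"] assms k OG unfolding k_replacement_def by auto
  then have "(w_repl f \<alpha> R S {q} {} q)\<^sup>2 \<le> 0"
    using locopt unfolding locally_optimal_def by fastforce
  then show ?thesis using gain_le_w_repl[of "{q}" q "{}"] q by simp
qed

text \<open>Step (3), one claw: elements \<open>T\<close> of \<open>Opt - S\<close> whose exchange sets share their heaviest
  element \<open>s\<close> form, with the union of these sets, a k-replacement; local optimality bounds
  their gains.\<close>

lemma claw_gain_le:
  assumes T: "T \<subseteq> Opt - S" and s: "s \<in> S - Opt"
    and s_in: "\<And>q. q \<in> T \<Longrightarrow> s \<in> Ys q"
    and heaviest: "\<And>q u. q \<in> T \<Longrightarrow> u \<in> Ys q \<Longrightarrow> w u \<le> w s"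
  shows "(\<Sum>q\<in>T. gain q - (\<Sum>u\<in>Ys q. w u) / 2) \<le> w s / 2"
proof -
  define B where "B = (\<Union>q\<in>T. Ys q)"
  have fin_T: "finite T" using T finite_Opt finite_subset by blast
  have fin_Y: "finite (Ys q)" if "q \<in> T" for q
    using Ys_sub that T finite_S finite_subset by blast
  have Y_S: "Ys q \<subseteq> S" if "q \<in> T" for q using Ys_sub that T by blast
  have "T \<subseteq> {q\<in>Opt - S. s \<in> Ys q}" using T s_in by blast
  then have card_T: "card T \<le> k"
    using card_mono[of "{q\<in>Opt - S. s \<in> Ys q}" T] finite_Opt Ys_mult[OF s] by auto
  have "card B \<le> k\<^sup>2 - k + 1"
    unfolding B_def using fin_T card_T fin_Y s_in Ys_card T by (intro card_star_le) auto
  then have repl: "k_replacement G I k S T B"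
    using Ys_exch[OF T] T OG Y_S card_T unfolding k_replacement_def B_def by auto
  have "(\<Sum>q\<in>T. (w_repl f \<alpha> R S T B q)\<^sup>2) \<le> (\<Sum>b\<in>B. (w b)\<^sup>2)"
    using locopt repl unfolding locally_optimal_def by blast
  also have "\<dots> \<le> (w s)\<^sup>2 + w s * (\<Sum>q\<in>T. \<Sum>u\<in>Ys q - {s}. w u)"
    unfolding B_def using fin_T fin_Y Y_S heaviest
    by (intro sum_squares_star_le) (auto intro: w_nonneg)
  finally have "(\<Sum>q\<in>T. gain q - (w s + (\<Sum>u\<in>Ys q - {s}. w u)) / 2) \<le> w s / 2"
    using fin_T s Y_S gain_le_w_repl[OF T]
    by (intro squared_claw_inequality) (auto intro!: sum_nonneg w_nonneg)
  moreover have "(\<Sum>u\<in>Ys q. w u) = w s + (\<Sum>u\<in>Ys q - {s}. w u)" if "q \<in> T" for q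
    using sum.remove[OF fin_Y s_in, of q w] that by simp
  ultimately show ?thesis by (simp cong: sum.cong)
qed

text \<open>Step (3), all claws: group the matched elements of \<open>Opt - S\<close> by the heaviest element of
  their exchange sets, and count every element of \<open>S - Opt\<close> at most \<open>k\<close> times.\<close>

lemma sum_gain_le: "sum gain (Opt - S) \<le> (real k + 1) / 2 * sum w (S - Opt)"
proof -
  define excess where "excess q = gain q - (\<Sum>u\<in>Ys q. w u) / 2" for q
  define matched where "matched = {q\<in>Opt - S. Ys q \<noteq> {}}"
  have fin: "finite (Opt - S)" "finite (S - Opt)" using finite_S finite_Opt by auto
  have "\<forall>q\<in>matched. \<exists>u. u \<in> Ys q \<and> (\<forall>u'\<in>Ys q. w u' \<le> w u)"
  proof
    fix q assume "q \<in> matched"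
    then have "q \<in> Opt - S" "Ys q \<noteq> {}" unfolding matched_def by auto
    then have fin_w: "finite (w ` Ys q)" and ne_w: "w ` Ys q \<noteq> {}"
      using finite_subset[OF Ys_sub fin(2)] by auto
    from Max_in[OF fin_w ne_w] obtain u where "u \<in> Ys q" "w u = Max (w ` Ys q)"
      by (metis imageE)
    then show "\<exists>u. u \<in> Ys q \<and> (\<forall>u'\<in>Ys q. w u' \<le> w u)"
      using Max_ge[OF fin_w] by auto
  qed
  from bchoice[OF this] obtain top where
    top: "\<forall>q\<in>matched. top q \<in> Ys q \<and> (\<forall>u\<in>Ys q. w u \<le> w (top q))"
    by blast
  have matched_sub: "matched \<subseteq> Opt - S" unfolding matched_def by auto
  have top_S: "top ` matched \<subseteq> S - Opt" using top Ys_sub matched_sub by blast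
  have "sum excess (Opt - S) = sum excess (Opt - S - matched) + sum excess matched"
    using sum.subset_diff[OF matched_sub fin(1)] .
  moreover have "sum excess (Opt - S - matched) \<le> 0"
    using gain_nonpos_unmatched unfolding excess_def matched_def by (intro sum_nonpos) auto
  moreover have "sum excess matched \<le> sum w (S - Opt) / 2"
  proof -
    have "sum excess matched = (\<Sum>s\<in>S - Opt. \<Sum>q\<in>{q\<in>matched. top q = s}. excess q)"
      using sum.group[OF finite_subset[OF matched_sub fin(1)] fin(2) top_S, of excess] by simp
    also have "\<dots> \<le> (\<Sum>s\<in>S - Opt. w s / 2)"
      using top matched_sub unfolding excess_def by (intro sum_mono claw_gain_le) auto
    finally show ?thesis by (simp add: sum_divide_distrib)
  qed
  ultimately have "sum excess (Opt - S) \<le> sum w (S - Opt) / 2" by linarith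
  moreover have "(\<Sum>q\<in>Opt - S. \<Sum>u\<in>Ys q. w u) \<le> real k * sum w (S - Opt)"
    using fin Ys_sub Ys_mult by (intro sum_over_bounded_cover) (auto intro: w_nonneg)
  moreover have "sum gain (Opt - S) = sum excess (Opt - S) + (\<Sum>q\<in>Opt - S. \<Sum>u\<in>Ys q. w u) / 2"
    unfolding excess_def by (simp add: sum_subtractf sum_divide_distrib)
  ultimately show ?thesis by (simp add: field_simps)
qed

lemma approximation: "f Opt - real (card (Opt - S)) * \<alpha> \<le> (real k + 3) / 2 * f S"
proof -
  have W: "0 \<le> sum w (S - Opt)" "sum w (S - Opt) \<le> f S"
    using sum_mono2[OF finite_S, of "S - Opt" w] sum_w_le w_nonneg by (auto intro: sum_nonneg)
  have "f Opt \<le> f (S \<union> Opt)" using SG OG by (intro f_mono) auto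
  also have "\<dots> \<le> f S + real (card (Opt - S)) * \<alpha> + (real k + 1) / 2 * sum w (S - Opt)"
    using sum_gain_ge sum_gain_le by linarith
  also have "(real k + 1) / 2 * sum w (S - Opt) \<le> (real k + 1) / 2 * f S"
    using W by (intro mult_left_mono) auto
  finally show ?thesis by (simp add: field_simps)
qed

end

theorem mainTheorem4:
  fixes G :: "'a set" and I :: "'a set set" and f :: "'a set \<Rightarrow> real" and k :: nat
    and \<epsilon> \<delta> \<alpha> :: real and R :: "'a rel" and e_star :: 'a and S Opt :: "'a set"
  assumes finG: "finite G"
    and f: "nonneg_monotone_submodular G f"
    and k: "k \<ge> 1"
    and kex: "k_exchange_system G I k"
    and singletons: "\<forall>e\<in>G. {e} \<in> I"
    and eps: "0 < \<epsilon>" "\<epsilon> < 1"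
    and delta: "\<delta> = 1 / (1 + (real k + 3) / (2 * \<epsilon>))"
    and estar: "e_star \<in> G" "\<forall>e\<in>G. f {e} \<le> f {e_star}"
    and fpos: "f {e_star} > 0"
    and alpha: "\<alpha> = f {e_star} * \<delta> / real (card G)"
    and order: "strict_linear_order_on G R"
    and SI: "S \<in> I"
    and locopt: "locally_optimal G I k f \<alpha> R S"
    and OI: "Opt \<in> I" and Omax: "\<forall>X\<in>I. f X \<le> f Opt"
  shows "((real k + 3) / 2 + \<epsilon>) * f S \<ge> f Opt"
proof -
  have IG: "I \<subseteq> Pow G"
    and exchange: "\<forall>A\<in>I. \<forall>B\<in>I. \<exists>Ys :: 'a \<Rightarrow> 'a set.
        (\<forall>e \<in> A - B. Ys e \<subseteq> B - A \<and> card (Ys e) \<le> k) \<and>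
        (\<forall>x \<in> B - A. card {e \<in> A - B. x \<in> Ys e} \<le> k) \<and>
        (\<forall>C. C \<subseteq> A - B \<longrightarrow> (B - (\<Union>e\<in>C. Ys e)) \<union> C \<in> I)"
    using kex unfolding k_exchange_system_def by auto
  from bspec[OF bspec[OF exchange OI] SI] obtain Ys :: "'a \<Rightarrow> 'a set" where
    Ys: "(\<forall>q\<in>Opt - S. Ys q \<subseteq> S - Opt \<and> card (Ys q) \<le> k) \<and>
      (\<forall>s\<in>S - Opt. card {q\<in>Opt - S. s \<in> Ys q} \<le> k) \<and>
      (\<forall>C. C \<subseteq> Opt - S \<longrightarrow> (S - (\<Union>q\<in>C. Ys q)) \<union> C \<in> I)"
    by (rule exE)
  then have Ys_sub: "\<And>q. q \<in> Opt - S \<Longrightarrow> Ys q \<subseteq> S - Opt"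
    and Ys_card: "\<And>q. q \<in> Opt - S \<Longrightarrow> card (Ys q) \<le> k"
    and Ys_mult: "\<And>s. s \<in> S - Opt \<Longrightarrow> card {q\<in>Opt - S. s \<in> Ys q} \<le> k"
    and Ys_exch: "\<And>C. C \<subseteq> Opt - S \<Longrightarrow> (S - (\<Union>q\<in>C. Ys q)) \<union> C \<in> I"
    by blast+
  have SG: "S \<subseteq> G" and OG: "Opt \<subseteq> G" using IG SI OI by auto
  have card_G: "card G > 0" using finG estar by (auto simp: card_gt_0_iff)
  have delta_pos: "\<delta> > 0" using delta eps by (simp add: add_pos_pos)
  have alpha_pos: "\<alpha> > 0" using alpha delta_pos fpos card_G by simp
  interpret local_search_analysis G I k f \<alpha> R S Opt Ys
    by (rule local_search_analysis.intro; fact)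
  have "real (card (Opt - S)) * \<alpha> \<le> real (card G) * \<alpha>"
    using card_mono[OF finG, of "Opt - S"] OG alpha_pos by (intro mult_right_mono) auto
  also have "\<dots> = \<delta> * f {e_star}" using alpha card_G by simp
  also have "\<dots> \<le> \<delta> * f Opt" using Omax singletons estar delta_pos by (intro mult_left_mono) auto
  finally have "(1 - \<delta>) * f Opt \<le> (real k + 3) / 2 * f S"
    using approximation by (simp add: algebra_simps)
  then show ?thesis using absorb_rounding_loss[of "(real k + 3) / 2" \<epsilon> \<delta>] eps delta by simp
qed

end
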